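(* Consider the control-affine system $\dot x = f(x) + g(x)u$ with $f,g$ Lipschitz and $\mathcal{C}^{m-1}$, state set $\mathcal{X}\subset\mathbb{R}^{n_x}$ compact, control set $\mathcal{U}\subset\mathbb{R}^{n_u}$ compact and convex, and a $\mathcal{C}^m$ function $h$ of relative degree $m$. Assume (Assumption 1): the set $\mathcal{X}_e = \{x_e : \exists u_e \in \mathcal{U},\ 0 = f(x_e) + g(x_e)u_e\}$ is closed, convex and known, and $g(x_e)$ has full column rank for every $x_e \in \mathcal{X}_e$. Let $P_{\mathcal{X}_e}(x) = \arg\min\{\|x - x'\|_2 : x' \in \mathcal{X}_e\}$ and $\zeta(x_e) = -g(x_e)^\dagger f(x_e)$. With $\Gamma_i$, $\psi_i$, $a(x)$, $b(x)$ as in the context, let $c(x)$ be a vector orthogonal to $a(x)$ and continuous in $x$, let $d:\mathbb{R}\times\mathbb{R}\to\mathbb{R}$ be continuous with $d(0,0) > 0$, let $u_n$ be a nominal controller, and let $$\pi'(x) = \arg\min_{u \in \mathcal{U}} \|u - u_n(x)\|_2^2 \ \text{ s.t. } \ a(x)^\top u \ge b(x),\ \ c(x)^\top\big[u - \zeta(P_{\mathcal{X}_e}(x))\big] \ge d\big(h(x), \|x - P_{\mathcal{X}_e}(x)\|_2\big).$$ Assume this problem is feasible for each $x \in \mathcal{X}$ and $\pi'(x) \notin \partial\mathcal{U}$. If $a(x) \ne 0$, $c(x) \ne 0$, and $u_n$ is continuous in $x$, then $\pi'$ is continuous in $x$.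
   Context: $h$ has relative degree $m$ means $L_g L_f^{i} h \equiv 0$ for $i = 0,\dots,m-2$. Let $\Gamma_1,\dots,\Gamma_m$ be class $\mathcal{K}$ functions (continuous, strictly increasing, zero at zero) with $\Gamma_i \in \mathcal{C}^{m-i}$; $\psi_0 = h$, $\psi_i = \dot\psi_{i-1} + \Gamma_i(\psi_{i-1})$ for $i = 1,\dots,m-1$ (time derivatives along the system); $a(x) = (L_g L_f^{m-1} h(x))^\top$ and $b(x) = -L_f^m h(x) - \sum_{i=0}^{m-1} L_f^i(\Gamma_{m-i}\circ\psi_{m-i-1})(x)$. $g^\dagger$ denotes the Moore–Penrose pseudoinverse and $\partial\mathcal{U}$ the boundary of $\mathcal{U}$. *)

theory Defs
  imports "HOL-Analysis.Analysis"
begin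

fun Ck :: "nat \<Rightarrow> ('a::euclidean_space \<Rightarrow> 'b::real_normed_vector) \<Rightarrow> bool" where
  "Ck 0 F \<longleftrightarrow> continuous_on UNIV F"
| "Ck (Suc k) F \<longleftrightarrow> continuous_on UNIV F \<and> F differentiable_on UNIV \<and>
     (\<forall>v\<in>Basis. Ck k (\<lambda>x. frechet_derivative F (at x) v))"

definition classK :: "(real \<Rightarrow> real) \<Rightarrow> bool" where
  "classK \<gamma> \<longleftrightarrow> continuous_on UNIV \<gamma> \<and> strict_mono \<gamma> \<and> \<gamma> 0 = 0"

definition lie :: "('a::real_normed_vector \<Rightarrow> 'a) \<Rightarrow> ('a \<Rightarrow> real) \<Rightarrow> 'a \<Rightarrow> real" where
  "lie F \<phi> x = frechet_derivative \<phi> (at x) (F x)"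

text \<open>L_g phi (transposed into a column vector): j-th entry is the Lie derivative
  along the j-th column of g.\<close>
definition lieg :: "(real^'n \<Rightarrow> real^'m^'n) \<Rightarrow> (real^'n \<Rightarrow> real) \<Rightarrow> real^'n \<Rightarrow> real^'m" where
  "lieg G \<phi> x = (\<chi> j. frechet_derivative \<phi> (at x) (column j (G x)))"

fun psi :: "(real^'n \<Rightarrow> real^'n) \<Rightarrow> (nat \<Rightarrow> real \<Rightarrow> real) \<Rightarrow> (real^'n \<Rightarrow> real) \<Rightarrow> nat \<Rightarrow> real^'n \<Rightarrow> real" where
  "psi F \<Gamma> h 0 = h"
| "psi F \<Gamma> h (Suc i) = (\<lambda>x. lie F (psi F \<Gamma> h i) x + \<Gamma> (Suc i) (psi F \<Gamma> h i x))"

definition acbf :: "(real^'n \<Rightarrow> real^'n) \<Rightarrow> (real^'n \<Rightarrow> real^'m^'n) \<Rightarrow> (real^'n \<Rightarrow> real) \<Rightarrow> nat \<Rightarrow> real^'n \<Rightarrow> real^'m" where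
  "acbf F G h m = lieg G ((lie F ^^ (m - 1)) h)"

definition bcbf :: "(real^'n \<Rightarrow> real^'n) \<Rightarrow> (nat \<Rightarrow> real \<Rightarrow> real) \<Rightarrow> (real^'n \<Rightarrow> real) \<Rightarrow> nat \<Rightarrow> real^'n \<Rightarrow> real" where
  "bcbf F \<Gamma> h m x = - (lie F ^^ m) h x
      - (\<Sum>i<m. (lie F ^^ i) (\<lambda>y. \<Gamma> (m - i) (psi F \<Gamma> h (m - i - 1) y)) x)"

definition pinv :: "real^'m^'n \<Rightarrow> real^'n^'m" where
  "pinv A = (THE B. A ** B ** A = A \<and> B ** A ** B = B \<and>
                    transpose (A ** B) = A ** B \<and> transpose (B ** A) = B ** A)"

definition equilibria :: "(real^'n \<Rightarrow> real^'n) \<Rightarrow> (real^'n \<Rightarrow> real^'m^'n) \<Rightarrow> (real^'m) set \<Rightarrow> (real^'n) set" where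
  "equilibria F G U = {xe. \<exists>ue\<in>U. 0 = F xe + G xe *v ue}"

definition zeta :: "(real^'n \<Rightarrow> real^'n) \<Rightarrow> (real^'n \<Rightarrow> real^'m^'n) \<Rightarrow> real^'n \<Rightarrow> real^'m" where
  "zeta F G xe = - (pinv (G xe) *v F xe)"

definition feas :: "(real^'n \<Rightarrow> real^'n) \<Rightarrow> (real^'n \<Rightarrow> real^'m^'n) \<Rightarrow> (real^'n \<Rightarrow> real) \<Rightarrow> nat
    \<Rightarrow> (nat \<Rightarrow> real \<Rightarrow> real) \<Rightarrow> (real^'m) set \<Rightarrow> (real^'n \<Rightarrow> real^'m) \<Rightarrow> (real \<Rightarrow> real \<Rightarrow> real)
    \<Rightarrow> real^'n \<Rightarrow> (real^'m) set" where
  "feas F G h m \<Gamma> U c d x =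
     (let P = closest_point (equilibria F G U) x in
      {u \<in> U. acbf F G h m x \<bullet> u \<ge> bcbf F \<Gamma> h m x \<and>
              c x \<bullet> (u - zeta F G P) \<ge> d (h x) (norm (x - P))})"

definition pi' :: "(real^'n \<Rightarrow> real^'n) \<Rightarrow> (real^'n \<Rightarrow> real^'m^'n) \<Rightarrow> (real^'n \<Rightarrow> real) \<Rightarrow> nat
    \<Rightarrow> (nat \<Rightarrow> real \<Rightarrow> real) \<Rightarrow> (real^'m) set \<Rightarrow> (real^'n \<Rightarrow> real^'m) \<Rightarrow> (real \<Rightarrow> real \<Rightarrow> real)
    \<Rightarrow> (real^'n \<Rightarrow> real^'m) \<Rightarrow> real^'n \<Rightarrow> real^'m" where
  "pi' F G h m \<Gamma> U c d un x =
     arg_min_on (\<lambda>u. (norm (u - un x))\<^sup>2) (feas F G h m \<Gamma> U c d x)"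

end

theory Submission
  imports Defs
begin

text \<open>
  Both constraints of the quadratic program are halfspaces \<open>a(x) \<bullet> u \<ge> b(x)\<close> and
  \<open>c(x) \<bullet> u \<ge> t(x)\<close> with data continuous in \<open>x\<close>: \<open>a\<close> and \<open>b\<close> are built from Lie derivatives of
  sufficiently smooth functions, the projection onto the closed convex set \<open>X\<^sub>e\<close> is continuous, and
  \<open>\<zeta>\<close> is continuous on \<open>X\<^sub>e\<close> because full column rank makes \<open>\<zeta>(x\<^sub>e)\<close> the unique equilibrium
  input, so its graph is closed in \<open>X\<^sub>e \<times> U\<close> with \<open>U\<close> compact.

  The minimiser \<open>\<pi>'(x)\<close> is the metric projection of \<open>u\<^sub>n(x)\<close> onto the feasible set \<open>K(x)\<close>.
  If \<open>x\<^sub>k \<rightarrow> x\<close> and \<open>\<pi>'(x\<^sub>k) \<rightarrow> u\<close>, then \<open>u \<in> K(x)\<close>, and \<open>u\<close> is at least as close to \<open>u\<^sub>n(x)\<close>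
  as every point that stays feasible near \<open>x\<close>. Since \<open>\<pi>'(x)\<close> is interior to \<open>U\<close> and \<open>a + c\<close> is a
  common ascent direction of the two constraints, \<open>\<pi>'(x) + t(a + c)\<close> is such a point for small
  \<open>t > 0\<close>; hence \<open>u = \<pi>'(x)\<close> by uniqueness of projections, and the closed graph theorem
  (\<open>U\<close> compact) gives continuity.
\<close>

section \<open>Smoothness classes\<close>

lemma Ck_Suc_imp_Ck: "Ck (Suc k) F \<Longrightarrow> Ck k F"
  by (induction k arbitrary: F) auto

lemma Ck_mono: "j \<le> k \<Longrightarrow> Ck k F \<Longrightarrow> Ck j F"
proof (induction k)
  case (Suc k)
  then show ?case
    using Ck_Suc_imp_Ck[of k F] by (cases "j = Suc k") simp_all
qed simp

lemma Ck_imp_continuous_on: "Ck k F \<Longrightarrow> continuous_on UNIV F"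
  by (cases k) auto

lemma Ck_SucI:
  fixes F :: "'a::euclidean_space \<Rightarrow> 'b::real_normed_vector"
  assumes "continuous_on UNIV F"
    and deriv: "\<And>x. (F has_derivative D x) (at x)"
    and "\<And>v. v \<in> Basis \<Longrightarrow> Ck k (\<lambda>x. D x v)"
  shows "Ck (Suc k) F"
proof -
  have "frechet_derivative F (at x) = D x" for x
    using frechet_derivative_at[OF deriv] by simp
  moreover have "F differentiable_on UNIV"
    using deriv unfolding differentiable_on_def differentiable_def by blast
  ultimately show ?thesis
    using assms by simp
qed

lemma Ck_SucD:
  assumes "Ck (Suc k) F"
  shows "continuous_on UNIV F" "(F has_derivative frechet_derivative F (at x)) (at x)"
    "\<And>v. v \<in> Basis \<Longrightarrow> Ck k (\<lambda>x. frechet_derivative F (at x) v)"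
  using assms frechet_derivative_works by (auto simp: differentiable_on_def)

lemma Ck_bounded_linear: "bounded_linear L \<Longrightarrow> Ck k F \<Longrightarrow> Ck k (\<lambda>x. L (F x))"
proof (induction k arbitrary: F)
  case 0
  then show ?case
    using continuous_on_compose2[OF linear_continuous_on[OF 0(1)], of UNIV F UNIV] by simp
next
  case (Suc k)
  note D = Ck_SucD[OF Suc(3)]
  show ?case
  proof (rule Ck_SucI)
    show "continuous_on UNIV (\<lambda>x. L (F x))"
      using continuous_on_compose2[OF linear_continuous_on[OF Suc(2)], of UNIV F UNIV] D(1) by simp
    show "((\<lambda>x. L (F x)) has_derivative (\<lambda>h. L (frechet_derivative F (at x) h))) (at x)" for x
      by (rule bounded_linear.has_derivative[OF Suc(2) D(2)])
  qed (use Suc.IH[OF Suc(2) D(3)] in blast)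
qed

lemma Ck_const: "Ck k (\<lambda>x. c)"
proof (induction k arbitrary: c)
  case (Suc k)
  show ?case
    by (rule Ck_SucI[where D="\<lambda>x h. 0"]) (auto intro: Suc.IH)
qed simp

lemma Ck_add: "Ck k F \<Longrightarrow> Ck k G \<Longrightarrow> Ck k (\<lambda>x. F x + G x)"
proof (induction k arbitrary: F G)
  case 0
  then show ?case by (simp add: continuous_on_add)
next
  case (Suc k)
  note D = Ck_SucD[OF Suc(2)] and E = Ck_SucD[OF Suc(3)]
  show ?case
  proof (rule Ck_SucI)
    show "continuous_on UNIV (\<lambda>x. F x + G x)"
      using D(1) E(1) by (rule continuous_on_add)
    show "((\<lambda>x. F x + G x) has_derivative
        (\<lambda>h. frechet_derivative F (at x) h + frechet_derivative G (at x) h)) (at x)" for x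
      by (rule has_derivative_add[OF D(2) E(2)])
  qed (use Suc.IH[OF D(3) E(3)] in blast)
qed

lemma Ck_uminus: "Ck k F \<Longrightarrow> Ck k (\<lambda>x. - F x)"
  using Ck_bounded_linear[of "\<lambda>y. - y"] bounded_linear_minus[OF bounded_linear_ident] by auto

lemma Ck_sum: "finite S \<Longrightarrow> (\<And>i. i \<in> S \<Longrightarrow> Ck k (F i)) \<Longrightarrow> Ck k (\<lambda>x. \<Sum>i\<in>S. F i x)"
  by (induction S rule: finite_induct) (auto intro: Ck_const Ck_add)

lemma Ck_mult:
  fixes F G :: "'a::euclidean_space \<Rightarrow> real"
  shows "Ck k F \<Longrightarrow> Ck k G \<Longrightarrow> Ck k (\<lambda>x. F x * G x)"
proof (induction k arbitrary: F G)
  case 0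
  then show ?case by (simp add: continuous_on_mult)
next
  case (Suc k)
  note D = Ck_SucD[OF Suc(2)] and E = Ck_SucD[OF Suc(3)]
  show ?case
  proof (rule Ck_SucI)
    show "continuous_on UNIV (\<lambda>x. F x * G x)"
      using D(1) E(1) by (rule continuous_on_mult)
    show "((\<lambda>x. F x * G x) has_derivative (\<lambda>h. F x * frechet_derivative G (at x) h
        + frechet_derivative F (at x) h * G x)) (at x)" for x
      by (rule has_derivative_mult[OF D(2) E(2)])
    show "Ck k (\<lambda>x. F x * frechet_derivative G (at x) v + frechet_derivative F (at x) v * G x)"
      if "v \<in> Basis" for v
      using Suc.IH[OF Ck_Suc_imp_Ck[OF Suc(2)] E(3)[OF that]]
        Suc.IH[OF D(3)[OF that] Ck_Suc_imp_Ck[OF Suc(3)]] by (rule Ck_add)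
  qed
qed

lemma Ck_compose_real:
  fixes \<gamma> :: "real \<Rightarrow> real" and \<phi> :: "'a::euclidean_space \<Rightarrow> real"
  shows "Ck k \<gamma> \<Longrightarrow> Ck k \<phi> \<Longrightarrow> Ck k (\<lambda>x. \<gamma> (\<phi> x))"
proof (induction k arbitrary: \<gamma>)
  case 0
  then show ?case using continuous_on_compose2[of UNIV \<gamma> UNIV \<phi>] by simp
next
  case (Suc k)
  note D = Ck_SucD[OF Suc(2)] and E = Ck_SucD[OF Suc(3)]
  have scalar: "frechet_derivative \<gamma> (at t) s = frechet_derivative \<gamma> (at t) 1 * s" for t s
    using linear_scale[OF has_derivative_linear[OF D(2)[of t]], of s 1] by (simp add: mult.commute)
  show ?case
  proof (rule Ck_SucI)
    show "continuous_on UNIV (\<lambda>x. \<gamma> (\<phi> x))"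
      using continuous_on_compose2[OF D(1) E(1)] by simp
    show "((\<lambda>x. \<gamma> (\<phi> x)) has_derivative
        (\<lambda>h. frechet_derivative \<gamma> (at (\<phi> x)) 1 * frechet_derivative \<phi> (at x) h)) (at x)" for x
    proof -
      have "(\<lambda>h. frechet_derivative \<gamma> (at (\<phi> x)) (frechet_derivative \<phi> (at x) h))
          = (\<lambda>h. frechet_derivative \<gamma> (at (\<phi> x)) 1 * frechet_derivative \<phi> (at x) h)"
        by (rule ext) (rule scalar)
      then show ?thesis
        using has_derivative_compose[OF E(2)[of x] D(2)[of "\<phi> x"]] by simp
    qed
    show "Ck k (\<lambda>x. frechet_derivative \<gamma> (at (\<phi> x)) 1 * frechet_derivative \<phi> (at x) v)"
      if "v \<in> Basis" for v
    proof (rule Ck_mult)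
      have "Ck k (\<lambda>t. frechet_derivative \<gamma> (at t) 1)"
        using D(3)[of 1] by simp
      then show "Ck k (\<lambda>x. frechet_derivative \<gamma> (at (\<phi> x)) 1)"
        using Ck_Suc_imp_Ck[OF Suc(3)] by (rule Suc.IH)
    qed (rule E(3)[OF that])
  qed
qed

lemma Ck_lie:
  fixes \<phi> :: "'a::euclidean_space \<Rightarrow> real"
  assumes \<phi>: "Ck (Suc k) \<phi>" and F: "Ck k F"
  shows "Ck k (lie F \<phi>)"
proof -
  have "frechet_derivative \<phi> (at x) y = (\<Sum>b\<in>Basis. (y \<bullet> b) * frechet_derivative \<phi> (at x) b)"
    for x y
    using Linear_Algebra.linear_componentwise[OF has_derivative_linear[OF Ck_SucD(2)[OF \<phi>]], of x y 1]
    by simp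
  then have "lie F \<phi> = (\<lambda>x. \<Sum>b\<in>Basis. (F x \<bullet> b) * frechet_derivative \<phi> (at x) b)"
    unfolding lie_def by (intro ext)
  moreover have "Ck k (\<lambda>x. (F x \<bullet> b) * frechet_derivative \<phi> (at x) b)" if "b \<in> Basis" for b
    using Ck_bounded_linear[OF bounded_linear_inner_left F] Ck_SucD(3)[OF \<phi> that] by (rule Ck_mult)
  ultimately show ?thesis
    using Ck_sum[OF finite_Basis, of k "\<lambda>b x. (F x \<bullet> b) * frechet_derivative \<phi> (at x) b"]
    by simp
qed

lemma Ck_funpow_lie:
  fixes \<phi> :: "'a::euclidean_space \<Rightarrow> real"
  shows "Ck n F \<Longrightarrow> Ck (i + k) \<phi> \<Longrightarrow> i + k \<le> n + 1 \<Longrightarrow> Ck k ((lie F ^^ i) \<phi>)"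
proof (induction i arbitrary: k)
  case (Suc i)
  have "Ck (Suc k) ((lie F ^^ i) \<phi>)"
    using Suc.prems by (intro Suc.IH) auto
  moreover have "Ck k F"
    using Suc.prems by (intro Ck_mono[of k n]) auto
  ultimately show ?case
    using Ck_lie by simp
qed simp

section \<open>Continuity of the barrier-function data\<close>

lemma Ck_psi:
  assumes f: "Ck (m - 1) f" and h: "Ck m h" and \<Gamma>: "\<forall>i\<in>{1..m}. Ck (m - i) (\<Gamma> i)"
  shows "j \<le> m \<Longrightarrow> Ck (m - j) (psi f \<Gamma> h j)"
proof (induction j)
  case (Suc j)
  define k where "k = m - Suc j"
  have \<psi>: "Ck (Suc k) (psi f \<Gamma> h j)"
    using Suc by (simp add: k_def Suc_diff_Suc)
  have "Ck k f"
    using f by (rule Ck_mono[rotated]) (simp add: k_def)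
  with \<psi> have "Ck k (lie f (psi f \<Gamma> h j))"
    by (rule Ck_lie)
  moreover have "Ck k (\<Gamma> (Suc j))"
    using \<Gamma> Suc.prems by (auto simp: k_def)
  then have "Ck k (\<lambda>x. \<Gamma> (Suc j) (psi f \<Gamma> h j x))"
    using Ck_Suc_imp_Ck[OF \<psi>] by (rule Ck_compose_real)
  ultimately show ?case
    unfolding k_def by (simp only: psi.simps) (rule Ck_add)
qed (use h in simp)

lemma continuous_on_bcbf:
  assumes m: "m \<ge> 1" and f: "Ck (m - 1) f" and h: "Ck m h"
    and \<Gamma>: "\<forall>i\<in>{1..m}. Ck (m - i) (\<Gamma> i)"
  shows "continuous_on UNIV (bcbf f \<Gamma> h m)"
proof -
  have "Ck 0 ((lie f ^^ m) h)"
    by (rule Ck_funpow_lie[OF f]) (use h m in auto)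
  \<comment> \<open>the \<open>i\<close>-th summand \<open>\<Gamma>\<^bsub>m-i\<^esub> \<circ> \<psi>\<^bsub>m-i-1\<^esub>\<close> is \<open>C\<^sup>i\<close>, just enough for \<open>i\<close> Lie derivatives\<close>
  moreover have "Ck 0 ((lie f ^^ i) (\<lambda>y. \<Gamma> (m - i) (psi f \<Gamma> h (m - i - 1) y)))" if i: "i < m" for i
  proof (rule Ck_funpow_lie[OF f])
    have "i \<le> m - (m - i - 1)"
      using i by arith
    moreover have "Ck (m - (m - i - 1)) (psi f \<Gamma> h (m - i - 1))"
      by (rule Ck_psi[OF f h \<Gamma>]) simp
    ultimately have \<psi>: "Ck i (psi f \<Gamma> h (m - i - 1))"
      by (rule Ck_mono)
    have "Ck i (\<Gamma> (m - i))"
      using \<Gamma>[rule_format, of "m - i"] i by simp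
    from Ck_compose_real[OF this \<psi>]
    show "Ck (i + 0) (\<lambda>y. \<Gamma> (m - i) (psi f \<Gamma> h (m - i - 1) y))"
      by simp
  qed (use i in simp)
  ultimately have "Ck 0 (\<lambda>x. - (lie f ^^ m) h x
      + - (\<Sum>i<m. (lie f ^^ i) (\<lambda>y. \<Gamma> (m - i) (psi f \<Gamma> h (m - i - 1) y)) x))"
    by (intro Ck_add Ck_uminus Ck_sum) auto
  then show ?thesis
    by (simp add: bcbf_def[abs_def] Ck_imp_continuous_on)
qed

lemma continuous_on_acbf:
  assumes m: "m \<ge> 1" and f: "Ck (m - 1) f" and g: "Ck (m - 1) g" and h: "Ck m h"
  shows "continuous_on UNIV (acbf f g h m)"
proof -
  have \<phi>: "Ck (Suc 0) ((lie f ^^ (m - 1)) h)"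
    by (rule Ck_funpow_lie[OF f]) (use h m in auto)
  have "continuous_on UNIV (\<lambda>x. column j (g x))" for j
    unfolding column_def
    by (intro continuous_on_vec_lambda continuous_on_component Ck_imp_continuous_on[OF g])
  then have "Ck 0 (lie (\<lambda>x. column j (g x)) ((lie f ^^ (m - 1)) h))" for j
    by (intro Ck_lie[OF \<phi>]) simp
  then show ?thesis
    unfolding acbf_def lieg_def lie_def by (simp add: continuous_on_vec_lambda)
qed

section \<open>The Moore--Penrose inverse of an injective matrix\<close>

definition penrose_inverse :: "real^'m^'n \<Rightarrow> real^'n^'m \<Rightarrow> bool" where
  "penrose_inverse A B \<longleftrightarrow> A ** B ** A = A \<and> B ** A ** B = B \<and>
     transpose (A ** B) = A ** B \<and> transpose (B ** A) = B ** A"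

lemma generalized_inverse_imp_left_inverse:
  fixes A :: "real^'m^'n"
  assumes "inj ((*v) A)" and "A ** B ** A = A"
  shows "B ** A = mat 1"
proof -
  have "A *v ((B ** A) *v v) = A *v v" for v
    by (metis matrix_vector_mul_assoc assms(2))
  then have "(B ** A) *v v = v" for v
    using assms(1) by (meson injD)
  then show ?thesis
    by (simp add: matrix_eq)
qed

lemma penrose_inverse_unique:
  fixes A :: "real^'m^'n"
  assumes inj: "inj ((*v) A)" and B: "penrose_inverse A B" and C: "penrose_inverse A C"
  shows "B = C"
proof -
  have BA: "B ** A = mat 1" and CA: "C ** A = mat 1"
    using generalized_inverse_imp_left_inverse[OF inj] B C by (auto simp: penrose_inverse_def)
  have "A ** B = transpose ((A ** C) ** (A ** B))"
    using B CA by (simp add: penrose_inverse_def matrix_mul_assoc flip: matrix_mul_assoc[of A C])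
  also have "\<dots> = (A ** B) ** (A ** C)"
    using B C by (simp add: penrose_inverse_def matrix_transpose_mul)
  also have "\<dots> = A ** C"
    using BA by (metis matrix_mul_assoc matrix_mul_rid)
  finally have ABC: "A ** B = A ** C" .
  have "B = B ** (A ** B)"
    using B by (simp add: penrose_inverse_def matrix_mul_assoc)
  also have "\<dots> = C"
    using ABC BA by (metis matrix_mul_assoc matrix_mul_lid)
  finally show ?thesis .
qed

lemma penrose_inverse_exists:
  fixes A :: "real^'m^'n"
  assumes inj: "inj ((*v) A)"
  shows "\<exists>B. penrose_inverse A B"
proof -
  define M where "M = transpose A ** A"
  have "inj ((*v) M)"
  proof (rule injI)
    fix x y
    assume "M *v x = M *v y"
    then have "(x - y) \<bullet> (M *v (x - y)) = 0"
      by (simp add: matrix_vector_mult_diff_distrib)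
    moreover have "(x - y) \<bullet> (M *v (x - y)) = (A *v (x - y)) \<bullet> (A *v (x - y))"
      unfolding M_def
      by (simp add: matrix_vector_mul_assoc[symmetric]) (metis dot_lmul_matrix inner_commute)
    ultimately have "A *v x = A *v y"
      by (simp add: matrix_vector_mult_diff_distrib)
    then show "x = y"
      using inj by (meson injD)
  qed
  then obtain L where L: "L ** M = mat 1"
    using matrix_left_invertible_injective by blast
  then have L': "M ** L = mat 1"
    using matrix_left_right_inverse by blast
  have "transpose L ** M = mat 1"
    by (metis L' M_def matrix_transpose_mul transpose_mat transpose_transpose)
  then have L_sym: "transpose L = L"
    by (metis L' matrix_mul_assoc matrix_mul_lid matrix_mul_rid)
  define B where "B = L ** transpose A"
  have BA: "B ** A = mat 1"
    unfolding B_def using L M_def by (simp add: matrix_mul_assoc[symmetric])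
  have "penrose_inverse A B"
    unfolding penrose_inverse_def
  proof (intro conjI)
    show "A ** B ** A = A" "B ** A ** B = B" "transpose (B ** A) = B ** A"
      using BA by (simp_all add: matrix_mul_assoc[symmetric])
    show "transpose (A ** B) = A ** B"
      unfolding B_def by (simp add: matrix_transpose_mul L_sym matrix_mul_assoc)
  qed
  then show ?thesis ..
qed

lemma pinv_left_inverse:
  fixes A :: "real^'m^'n"
  assumes inj: "inj ((*v) A)"
  shows "pinv A ** A = mat 1"
proof -
  have "penrose_inverse A (pinv A)"
    unfolding pinv_def penrose_inverse_def[symmetric]
    using penrose_inverse_exists[OF inj] penrose_inverse_unique[OF inj] by (metis theI)
  then show ?thesis
    using generalized_inverse_imp_left_inverse[OF inj] by (simp add: penrose_inverse_def)
qed

section \<open>The equilibrium input\<close>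

lemma zeta_eqI:
  fixes f :: "real^'nx \<Rightarrow> real^'nx" and g :: "real^'nx \<Rightarrow> real^'nu^'nx"
  assumes "rank (g xe) = CARD('nu)" and "0 = f xe + g xe *v ue"
  shows "zeta f g xe = ue"
proof -
  have "f xe = - (g xe *v ue)"
    using assms(2) by (simp add: eq_neg_iff_add_eq_0 add.commute)
  then have "zeta f g xe = (pinv (g xe) ** g xe) *v ue"
    by (simp add: zeta_def matrix_vector_mul_assoc linear_neg[OF matrix_vector_mul_linear])
  also have "\<dots> = ue"
    using pinv_left_inverse[OF full_rank_injective[THEN iffD1, OF assms(1)]] by simp
  finally show ?thesis .
qed

lemma continuous_on_matrix_vector_mult:
  fixes A :: "'a::topological_space \<Rightarrow> real^'m^'n"
  assumes "continuous_on S A" and "continuous_on S v"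
  shows "continuous_on S (\<lambda>x. A x *v v x)"
  unfolding matrix_vector_mult_def
  by (intro continuous_on_vec_lambda continuous_on_sum continuous_on_mult continuous_on_component
      assms)

lemma continuous_on_zeta:
  fixes f :: "real^'nx \<Rightarrow> real^'nx" and g :: "real^'nx \<Rightarrow> real^'nu^'nx"
  assumes f: "continuous_on UNIV f" and g: "continuous_on UNIV g" and U: "compact U"
    and closed: "closed (equilibria f g U)"
    and rank: "\<forall>xe\<in>equilibria f g U. rank (g xe) = CARD('nu)"
  shows "continuous_on (equilibria f g U) (zeta f g)"
proof (rule continuous_from_closed_graph[OF U])
  let ?Xe = "equilibria f g U"
  have graph: "(\<lambda>xe. (xe, zeta f g xe)) ` ?Xe = (?Xe \<times> U) \<inter> {p. f (fst p) + g (fst p) *v snd p = 0}"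
    using rank zeta_eqI[of g _ f] by (auto simp: equilibria_def image_iff) force+
  then show "zeta f g \<in> ?Xe \<rightarrow> U"
    by blast
  have "continuous_on UNIV (\<lambda>p::(real^'nx) \<times> (real^'nu). f (fst p) + g (fst p) *v snd p)"
    by (intro continuous_intros continuous_on_matrix_vector_mult
        continuous_on_compose2[OF f] continuous_on_compose2[OF g]) auto
  then show "closed ((\<lambda>xe. (xe, zeta f g xe)) ` ?Xe)"
    unfolding graph using closed compact_imp_closed[OF U]
    by (intro closed_Int closed_Times closed_Collect_eq continuous_on_const) auto
qed

lemma continuous_on_closest_point_closed_convex:
  assumes "closed S" and "convex S"
  shows "continuous_on T (closest_point S)"
proof (cases "S = {}")
  case True
  then have "closest_point S = (\<lambda>_. closest_point {} 0)"
    by (simp add: closest_point_def fun_eq_iff)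
  then show ?thesis
    by simp
qed (use assms continuous_on_closest_point in blast)

lemma continuous_on_zeta_closest_point:
  fixes f :: "real^'nx \<Rightarrow> real^'nx" and g :: "real^'nx \<Rightarrow> real^'nu^'nx"
  assumes f: "continuous_on UNIV f" and g: "continuous_on UNIV g" and U: "compact U"
    and closed: "closed (equilibria f g U)" and convex: "convex (equilibria f g U)"
    and rank: "\<forall>xe\<in>equilibria f g U. rank (g xe) = CARD('nu)"
  shows "continuous_on UNIV (\<lambda>x. zeta f g (closest_point (equilibria f g U) x))"
proof (cases "equilibria f g U = {}")
  case True
  then show ?thesis
    by (simp add: closest_point_def)
next
  case False
  show ?thesis
    using continuous_on_zeta[OF f g U closed rank] continuous_on_closest_point[OF convex closed False]
    by (rule continuous_on_compose2) (auto intro: closest_point_in_set[OF closed False])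
qed

definition feas_threshold :: "(real^'n \<Rightarrow> real^'n) \<Rightarrow> (real^'n \<Rightarrow> real^'m^'n) \<Rightarrow> (real^'n \<Rightarrow> real)
    \<Rightarrow> (real^'m) set \<Rightarrow> (real^'n \<Rightarrow> real^'m) \<Rightarrow> (real \<Rightarrow> real \<Rightarrow> real) \<Rightarrow> real^'n \<Rightarrow> real" where
  "feas_threshold F G h U c d x =
     (let P = closest_point (equilibria F G U) x in d (h x) (norm (x - P)) + c x \<bullet> zeta F G P)"

lemma feas_eq_halfspaces:
  "feas F G h m \<Gamma> U c d x = {u \<in> U. bcbf F \<Gamma> h m x \<le> acbf F G h m x \<bullet> u \<and>
     feas_threshold F G h U c d x \<le> c x \<bullet> u}"
  by (auto simp: feas_def feas_threshold_def Let_def algebra_simps)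

lemma continuous_on_feas_threshold:
  fixes f :: "real^'nx \<Rightarrow> real^'nx" and g :: "real^'nx \<Rightarrow> real^'nu^'nx"
  assumes f: "continuous_on UNIV f" and g: "continuous_on UNIV g" and h: "continuous_on UNIV h"
    and U: "compact U" and closed: "closed (equilibria f g U)" and convex: "convex (equilibria f g U)"
    and rank: "\<forall>xe\<in>equilibria f g U. rank (g xe) = CARD('nu)"
    and c: "continuous_on X c" and d: "continuous_on UNIV (\<lambda>p. d (fst p) (snd p))"
  shows "continuous_on X (feas_threshold f g h U c d)"
proof -
  define P where "P = closest_point (equilibria f g U)"
  have "continuous_on UNIV P"
    unfolding P_def using closed convex by (rule continuous_on_closest_point_closed_convex)
  then have "continuous_on UNIV (\<lambda>x. (h x, norm (x - P x)))"
    using h by (intro continuous_intros)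
  then have "continuous_on UNIV (\<lambda>x. d (h x) (norm (x - P x)))"
    using continuous_on_compose2[OF d] by fastforce
  moreover have "continuous_on UNIV (\<lambda>x. zeta f g (P x))"
    unfolding P_def using f g U closed convex rank by (rule continuous_on_zeta_closest_point)
  ultimately show ?thesis
    unfolding feas_threshold_def Let_def P_def[symmetric] using c
    by (intro continuous_intros) (auto intro: continuous_on_subset)
qed

section \<open>Projection onto a moving convex set\<close>

lemma arg_min_on_norm_eq_closest_point:
  fixes S :: "'a::euclidean_space set"
  assumes "closed S" and "convex S" and "S \<noteq> {}"
  shows "arg_min_on (\<lambda>u. (norm (u - y))\<^sup>2) S = closest_point S y"
proof -
  have "is_arg_min (\<lambda>u. (norm (u - y))\<^sup>2) (\<lambda>u. u \<in> S) (closest_point S y)"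
    using closest_point_in_set[OF assms(1,3)] closest_point_le[OF assms(1)]
    by (auto simp: is_arg_min_def dist_norm norm_minus_commute not_less intro: power_mono)
  then have "is_arg_min (\<lambda>u. (norm (u - y))\<^sup>2) (\<lambda>u. u \<in> S) (arg_min_on (\<lambda>u. (norm (u - y))\<^sup>2) S)"
    unfolding arg_min_on_def arg_min_def by (rule someI)
  then show ?thesis
    using assms(1,2)
    by (intro closest_point_unique)
      (auto simp: is_arg_min_def dist_norm norm_minus_commute not_less intro: power2_le_imp_le)
qed

lemma eventually_nhds_within_pos:
  fixes f :: "'a::topological_space \<Rightarrow> real"
  assumes "continuous_on X f" and "x0 \<in> X" and "0 < f x0"
  shows "\<forall>\<^sub>F x in nhds x0. x \<in> X \<longrightarrow> 0 < f x"
proof -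
  have "\<forall>\<^sub>F x in at x0 within X. 0 < f x"
    using assms by (intro order_tendstoD(1)[of f "f x0"]) (auto simp: continuous_on_def)
  then show ?thesis
    using assms(3) by (auto simp: eventually_at_filter elim: eventually_mono)
qed

lemma closed_Sigma_fibre:
  assumes "closed (Sigma X K)" and "x \<in> X"
  shows "closed (K x)"
proof -
  have "K x = Pair x -` Sigma X K"
    using assms(2) by auto
  also have "closed \<dots>"
    using assms(1) by (intro continuous_closed_vimage continuous_intros)
  finally show ?thesis .
qed

lemma closest_point_family_limit:
  fixes K :: "'a::metric_space \<Rightarrow> 'b::euclidean_space set"
  assumes convex: "\<And>x. x \<in> X \<Longrightarrow> convex (K x)" and nonempty: "\<And>x. x \<in> X \<Longrightarrow> K x \<noteq> {}"
    and graph: "closed (Sigma X K)" and Y: "continuous_on X Y"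
    and lower: "\<And>x. x \<in> X \<Longrightarrow>
      closest_point (K x) (Y x) \<in> closure {w. \<forall>\<^sub>F x' in nhds x. x' \<in> X \<longrightarrow> w \<in> K x'}"
    and s: "\<And>n. s n \<in> X" "s \<longlonglongrightarrow> a"
    and u: "(\<lambda>n. closest_point (K (s n)) (Y (s n))) \<longlonglongrightarrow> u"
  shows "a \<in> X \<and> u = closest_point (K a) (Y a)"
proof -
  have closed: "closed (K x)" if "x \<in> X" for x
    using graph that by (rule closed_Sigma_fibre)
  have "(s n, closest_point (K (s n)) (Y (s n))) \<in> Sigma X K" for n
    by (simp add: s(1) closed nonempty closest_point_in_set)
  from closed_sequentially[OF graph this tendsto_Pair[OF s(2) u]]
  have "(a, u) \<in> Sigma X K" .
  then have a: "a \<in> X" and u_mem: "u \<in> K a"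
    by auto
  have YS: "(\<lambda>n. Y (s n)) \<longlonglongrightarrow> Y a"
    using Y s a by (intro continuous_on_tendsto_compose[OF Y]) auto
  have "dist (Y a) u \<le> dist (Y a) w"
    if "\<forall>\<^sub>F x in nhds a. x \<in> X \<longrightarrow> w \<in> K x" for w
  proof (rule tendsto_le[OF _ tendsto_dist[OF YS tendsto_const] tendsto_dist[OF YS u]])
    show "\<forall>\<^sub>F n in sequentially. dist (Y (s n)) (closest_point (K (s n)) (Y (s n))) \<le> dist (Y (s n)) w"
      using eventually_compose_filterlim[OF that s(2)]
      by eventually_elim (simp add: s(1) closed closest_point_le)
  qed simp
  then have "closure {w. \<forall>\<^sub>F x in nhds a. x \<in> X \<longrightarrow> w \<in> K x} \<subseteq> {w. dist (Y a) u \<le> dist (Y a) w}"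
    by (intro closure_minimal closed_Collect_le continuous_intros) auto
  then have "dist (Y a) u \<le> dist (Y a) (closest_point (K a) (Y a))"
    using lower[OF a] by blast
  then have "\<forall>w\<in>K a. dist (Y a) u \<le> dist (Y a) w"
    using closest_point_le[OF closed[OF a]] by (meson order_trans)
  with a show ?thesis
    using closest_point_unique[OF convex[OF a] closed[OF a] u_mem] by blast
qed

lemma continuous_on_closest_point_family:
  fixes K :: "'a::euclidean_space \<Rightarrow> 'b::euclidean_space set"
  assumes U: "compact U" and subset: "\<And>x. x \<in> X \<Longrightarrow> K x \<subseteq> U"
    and convex: "\<And>x. x \<in> X \<Longrightarrow> convex (K x)" and nonempty: "\<And>x. x \<in> X \<Longrightarrow> K x \<noteq> {}"
    and graph: "closed (Sigma X K)" and Y: "continuous_on X Y"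
    and lower: "\<And>x. x \<in> X \<Longrightarrow>
      closest_point (K x) (Y x) \<in> closure {w. \<forall>\<^sub>F x' in nhds x. x' \<in> X \<longrightarrow> w \<in> K x'}"
  shows "continuous_on X (\<lambda>x. closest_point (K x) (Y x))"
proof (rule continuous_from_closed_graph[OF U])
  have "closest_point (K x) (Y x) \<in> K x" if "x \<in> X" for x
    using closed_Sigma_fibre[OF graph that] nonempty[OF that] by (rule closest_point_in_set)
  then show "(\<lambda>x. closest_point (K x) (Y x)) \<in> X \<rightarrow> U"
    using subset by blast
  show "closed ((\<lambda>x. (x, closest_point (K x) (Y x))) ` X)"
    unfolding closed_sequential_limits
  proof (intro allI impI, elim conjE)
    fix z :: "nat \<Rightarrow> 'a \<times> 'b" and l
    assume z: "\<forall>n. z n \<in> (\<lambda>x. (x, closest_point (K x) (Y x))) ` X" and lim: "z \<longlonglongrightarrow> l"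
    define s where "s n = fst (z n)" for n
    have s: "s n \<in> X" and snd_z: "snd (z n) = closest_point (K (s n)) (Y (s n))" for n
      using z[rule_format, of n] by (auto simp: s_def)
    have "s \<longlonglongrightarrow> fst l"
      unfolding s_def using lim by (rule tendsto_fst)
    moreover have "(\<lambda>n. closest_point (K (s n)) (Y (s n))) \<longlonglongrightarrow> snd l"
      using tendsto_snd[OF lim] by (simp add: snd_z)
    ultimately have "fst l \<in> X \<and> snd l = closest_point (K (fst l)) (Y (fst l))"
      using closest_point_family_limit[where s=s and a="fst l" and u="snd l", OF convex nonempty graph Y lower]
        s by blast
    then show "l \<in> (\<lambda>x. (x, closest_point (K x) (Y x))) ` X"
      by (metis (no_types, lifting) image_eqI prod.collapse)
  qed
qed

lemma strictly_feasible_approximation: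
  fixes A C :: "'a::topological_space \<Rightarrow> 'b::euclidean_space" and B E :: "'a \<Rightarrow> real"
  assumes cont: "continuous_on X A" "continuous_on X B" "continuous_on X C" "continuous_on X E"
    and x0: "x0 \<in> X" and u0: "u0 \<in> interior U" "B x0 \<le> A x0 \<bullet> u0" "E x0 \<le> C x0 \<bullet> u0"
    and v: "0 < A x0 \<bullet> v" "0 < C x0 \<bullet> v"
  shows "u0 \<in> closure {w. \<forall>\<^sub>F x in nhds x0. x \<in> X \<longrightarrow> w \<in> {u \<in> U. B x \<le> A x \<bullet> u \<and> E x \<le> C x \<bullet> u}}"
    (is "_ \<in> closure ?W")
proof -
  obtain \<delta> where \<delta>: "\<delta> > 0" "ball u0 \<delta> \<subseteq> U"
    using u0(1) mem_interior by blast
  have strict: "w \<in> ?W" if "w \<in> U" "B x0 < A x0 \<bullet> w" "E x0 < C x0 \<bullet> w" for w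
  proof -
    have "\<forall>\<^sub>F x in nhds x0. x \<in> X \<longrightarrow> 0 < A x \<bullet> w - B x"
      using that cont x0 by (intro eventually_nhds_within_pos continuous_intros) auto
    moreover have "\<forall>\<^sub>F x in nhds x0. x \<in> X \<longrightarrow> 0 < C x \<bullet> w - E x"
      using that cont x0 by (intro eventually_nhds_within_pos continuous_intros) auto
    ultimately have "\<forall>\<^sub>F x in nhds x0. x \<in> X \<longrightarrow> w \<in> {u \<in> U. B x \<le> A x \<bullet> u \<and> E x \<le> C x \<bullet> u}"
      by eventually_elim (use \<open>w \<in> U\<close> in auto)
    then show ?thesis
      by simp
  qed
  have step_pos: "0 < \<delta> / (norm v + 1)"
    using \<delta>(1) by (simp add: add_nonneg_pos)
  have "\<forall>\<^sub>F t in at_right 0. u0 + t *\<^sub>R v \<in> ?W"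
    using eventually_at_right_real[OF step_pos]
  proof eventually_elim
    case (elim t)
    then have t: "0 < t" "t * (norm v + 1) < \<delta>"
      by (simp_all add: less_divide_eq add_nonneg_pos)
    then have "dist u0 (u0 + t *\<^sub>R v) < \<delta>"
      by (simp add: dist_norm distrib_left)
    then have "u0 + t *\<^sub>R v \<in> U"
      using \<delta>(2) by auto
    moreover have "0 < t * (A x0 \<bullet> v)" "0 < t * (C x0 \<bullet> v)"
      using t(1) v by simp_all
    then have "B x0 < A x0 \<bullet> (u0 + t *\<^sub>R v)" "E x0 < C x0 \<bullet> (u0 + t *\<^sub>R v)"
      using u0(2,3) by (simp_all add: inner_add_right)
    ultimately show ?case
      by (rule strict)
  qed
  then have ev: "\<forall>\<^sub>F t in at_right 0. u0 + t *\<^sub>R v \<in> closure ?W"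
    by (rule eventually_mono) (rule closure_subset[THEN subsetD])
  have "((\<lambda>t. u0 + t *\<^sub>R v) \<longlongrightarrow> u0 + 0 *\<^sub>R v) (at_right 0)"
    by (intro tendsto_add tendsto_scaleR tendsto_const tendsto_ident_at)
  then have lim: "((\<lambda>t. u0 + t *\<^sub>R v) \<longlongrightarrow> u0) (at_right 0)"
    by simp
  show ?thesis
    using Lim_in_closed_set[OF closed_closure ev _ lim] by simp
qed

lemma closed_Sigma_halfspace:
  fixes A :: "'a::euclidean_space \<Rightarrow> 'b::euclidean_space" and B :: "'a \<Rightarrow> real"
  assumes "closed X" and "continuous_on X A" and "continuous_on X B"
  shows "closed (SIGMA x:X. {u. B x \<le> A x \<bullet> u})"
proof -
  have "continuous_on (X \<times> UNIV) (\<lambda>p. A (fst p))" "continuous_on (X \<times> UNIV) (\<lambda>p. B (fst p))"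
    by (rule continuous_on_compose2[OF assms(2) continuous_on_fst[OF continuous_on_id]], force)
      (rule continuous_on_compose2[OF assms(3) continuous_on_fst[OF continuous_on_id]], force)
  then have "continuous_on (X \<times> UNIV) (\<lambda>p. A (fst p) \<bullet> snd p - B (fst p))"
    by (intro continuous_on_diff continuous_on_inner continuous_on_snd continuous_on_id)
  then have "closed ((X \<times> UNIV) \<inter> (\<lambda>p. A (fst p) \<bullet> snd p - B (fst p)) -` {0..})"
    using assms(1) by (intro continuous_closed_preimage closed_Times) simp_all
  moreover have "(SIGMA x:X. {u. B x \<le> A x \<bullet> u})
      = (X \<times> UNIV) \<inter> (\<lambda>p. A (fst p) \<bullet> snd p - B (fst p)) -` {0..}"
    by auto
  ultimately show ?thesis
    by simp
qed

lemma continuous_on_arg_min_two_halfspaces: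
  fixes A C Y :: "'a::euclidean_space \<Rightarrow> 'b::euclidean_space" and B E :: "'a \<Rightarrow> real"
  assumes U: "compact U" "convex U" and X: "compact X"
    and cont: "continuous_on X A" "continuous_on X B" "continuous_on X C" "continuous_on X E"
      "continuous_on X Y"
    and ascent: "\<And>x. x \<in> X \<Longrightarrow> \<exists>v. 0 < A x \<bullet> v \<and> 0 < C x \<bullet> v"
    and nonempty: "\<And>x. x \<in> X \<Longrightarrow> {u \<in> U. B x \<le> A x \<bullet> u \<and> E x \<le> C x \<bullet> u} \<noteq> {}"
    and interior: "\<And>x. x \<in> X \<Longrightarrow>
      arg_min_on (\<lambda>u. (norm (u - Y x))\<^sup>2) {u \<in> U. B x \<le> A x \<bullet> u \<and> E x \<le> C x \<bullet> u} \<notin> frontier U"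
  shows "continuous_on X
    (\<lambda>x. arg_min_on (\<lambda>u. (norm (u - Y x))\<^sup>2) {u \<in> U. B x \<le> A x \<bullet> u \<and> E x \<le> C x \<bullet> u})"
proof -
  define K where "K x = {u \<in> U. B x \<le> A x \<bullet> u \<and> E x \<le> C x \<bullet> u}" for x
  have U_closed: "closed U"
    using U(1) by (rule compact_imp_closed)
  have K_eq: "K x = U \<inter> {u. A x \<bullet> u \<ge> B x} \<inter> {u. C x \<bullet> u \<ge> E x}" for x
    by (auto simp: K_def)
  have closed: "closed (K x)" and convex: "convex (K x)" for x
    unfolding K_eq using U_closed U(2)
    by (simp_all add: closed_Int closed_halfspace_ge convex_Int convex_halfspace_ge)
  have arg_min_eq: "arg_min_on (\<lambda>u. (norm (u - Y x))\<^sup>2) (K x) = closest_point (K x) (Y x)"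
    if "x \<in> X" for x
    using closed convex nonempty[OF that] unfolding K_def by (rule arg_min_on_norm_eq_closest_point)
  have "Sigma X K = (X \<times> U) \<inter> (SIGMA x:X. {u. B x \<le> A x \<bullet> u}) \<inter> (SIGMA x:X. {u. E x \<le> C x \<bullet> u})"
    by (auto simp: K_def)
  then have graph: "closed (Sigma X K)"
    using compact_imp_closed[OF X] U_closed cont
    by (simp add: closed_Int closed_Times closed_Sigma_halfspace)
  have "closest_point (K x) (Y x) \<in> closure {w. \<forall>\<^sub>F x' in nhds x. x' \<in> X \<longrightarrow> w \<in> K x'}"
    if x: "x \<in> X" for x
  proof -
    have mem: "closest_point (K x) (Y x) \<in> K x"
      using closed nonempty[OF x] unfolding K_def by (rule closest_point_in_set)
    then have "closest_point (K x) (Y x) \<in> interior U"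
      using interior[OF x] arg_min_eq[OF x] U_closed
      by (simp add: K_def frontier_def)
    moreover obtain v where "0 < A x \<bullet> v" "0 < C x \<bullet> v"
      using ascent[OF x] by blast
    ultimately show ?thesis
      using strictly_feasible_approximation[OF cont(1-4) x] mem unfolding K_def by blast
  qed
  then have "continuous_on X (\<lambda>x. closest_point (K x) (Y x))"
    using U(1) convex nonempty graph cont(5) unfolding K_def
    by (intro continuous_on_closest_point_family) auto
  then show ?thesis
    unfolding K_def[symmetric] by (subst continuous_on_cong[OF refl arg_min_eq]) simp_all
qed

theorem proposition4:
  fixes f :: "real^'nx \<Rightarrow> real^'nx" and g :: "real^'nx \<Rightarrow> real^'nu^'nx"
    and h :: "real^'nx \<Rightarrow> real" and m :: nat and \<Gamma> :: "nat \<Rightarrow> real \<Rightarrow> real"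
    and X :: "(real^'nx) set" and U :: "(real^'nu) set"
    and c :: "real^'nx \<Rightarrow> real^'nu" and d :: "real \<Rightarrow> real \<Rightarrow> real"
    and un :: "real^'nx \<Rightarrow> real^'nu"
  assumes m_pos: "m \<ge> 1"
    and f_lip: "\<exists>L. L-lipschitz_on UNIV f" and g_lip: "\<exists>L. L-lipschitz_on UNIV g"
    and f_smooth: "Ck (m - 1) f" and g_smooth: "Ck (m - 1) g" and h_smooth: "Ck m h"
    and reldeg: "\<forall>i. i + 2 \<le> m \<longrightarrow> (\<forall>x. lieg g ((lie f ^^ i) h) x = 0)"
    and Gamma: "\<forall>i\<in>{1..m}. classK (\<Gamma> i) \<and> Ck (m - i) (\<Gamma> i)"
    and X_cpt: "compact X" and U_cpt: "compact U" and U_cvx: "convex U"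
    and Xe_closed: "closed (equilibria f g U)" and Xe_cvx: "convex (equilibria f g U)"
    and Xe_rank: "\<forall>xe\<in>equilibria f g U. rank (g xe) = CARD('nu)"
    and c_orth: "\<forall>x\<in>X. c x \<bullet> acbf f g h m x = 0"
    and c_cont: "continuous_on X c"
    and d_cont: "continuous_on UNIV (\<lambda>p. d (fst p) (snd p))" and d_pos: "d 0 0 > 0"
    and feasible: "\<forall>x\<in>X. feas f g h m \<Gamma> U c d x \<noteq> {}"
    and interior_sol: "\<forall>x\<in>X. pi' f g h m \<Gamma> U c d un x \<notin> frontier U"
    and a_nz: "\<forall>x\<in>X. acbf f g h m x \<noteq> 0"
    and c_nz: "\<forall>x\<in>X. c x \<noteq> 0"
    and un_cont: "continuous_on X un"
  shows "continuous_on X (pi' f g h m \<Gamma> U c d un)"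
proof -
  \<comment> \<open>\<open>a + c\<close> is a common ascent direction since \<open>a \<bottom> c\<close> and both are nonzero\<close>
  have ascent: "\<exists>v. 0 < acbf f g h m x \<bullet> v \<and> 0 < c x \<bullet> v" if "x \<in> X" for x
    using that a_nz c_nz c_orth
    by (intro exI[of _ "acbf f g h m x + c x"]) (simp add: inner_add_right inner_commute)
  have "continuous_on X (feas_threshold f g h U c d)"
    using Ck_imp_continuous_on[OF f_smooth] Ck_imp_continuous_on[OF g_smooth]
      Ck_imp_continuous_on[OF h_smooth] U_cpt Xe_closed Xe_cvx Xe_rank c_cont d_cont
    by (rule continuous_on_feas_threshold)
  moreover have "\<forall>i\<in>{1..m}. Ck (m - i) (\<Gamma> i)"
    using Gamma by blast
  ultimately show ?thesis
    using feasible interior_sol unfolding pi'_def feas_eq_halfspaces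
    by (intro continuous_on_arg_min_two_halfspaces[OF U_cpt U_cvx X_cpt _ _ _ _ _ ascent]
        continuous_on_subset[OF continuous_on_acbf[OF m_pos f_smooth g_smooth h_smooth]]
        continuous_on_subset[OF continuous_on_bcbf[OF m_pos f_smooth h_smooth]] c_cont un_cont)
      auto
qed

end
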